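(* Let $p$ be an odd prime with $p\equiv 3\pmod 4$. Then for any odd Dirichlet characters $\chi_1,\chi_2$ modulo $p$ with $\chi_1\chi_2\neq\chi_0$, $$\sum_{a=0}^{p-1}\sum_{b=0}^{p-1}\sum_{c=0}^{p-1}\sum_{d=0}^{p-1}\overline{\chi_1}\,\overline{\chi_2}(a^5+b^5-c^5-d^5)\,\chi_1\chi_2(a+b-c-d)=0.$$
   Context: $\chi_0$ denotes the principal character modulo $p$. A character $\chi$ is odd if $\chi(-1)=-1$. Dirichlet characters modulo $p$ are extended by $\chi(x)=0$ when $p\mid x$, and $\overline{\chi}$ denotes the complex conjugate character; $\overline{\chi_1}\,\overline{\chi_2}(x)$ means $\overline{\chi_1}(x)\overline{\chi_2}(x)$. *)

theory Defs
  imports "HOL-Analysis.Analysis" "HOL-Number_Theory.Number_Theory"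
begin

definition dirichlet_char :: "int \<Rightarrow> (int \<Rightarrow> complex) \<Rightarrow> bool" where
  "dirichlet_char n chi \<longleftrightarrow>
     (\<forall>a b. chi (a * b) = chi a * chi b) \<and>
     (\<forall>a. chi (a + n) = chi a) \<and>
     (\<forall>a. chi a = 0 \<longleftrightarrow> \<not> coprime a n)"

definition principal_char :: "int \<Rightarrow> int \<Rightarrow> complex" where
  "principal_char n a = (if coprime a n then 1 else 0)"

definition odd_char :: "(int \<Rightarrow> complex) \<Rightarrow> bool" where
  "odd_char chi \<longleftrightarrow> chi (-1) = -1"

end

theory Submission
  imports Defs
begin

text \<open>Only the even non-principal character \<psi> = \<chi>1 \<chi>2 enters the sum. Substituting
  (t a, t b, t c, t d) for a unit t permutes the summation range and multiplies every term by
  cnj(\<psi> t)^5 \<psi> t = cnj(\<psi> t)^4, so the sum vanishes as soon as \<psi>(t)^4 \<noteq> 1 for some t.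
  Such a t exists: by Euler's criterion t^((p-1)/2) \<equiv> \<plusminus>1 (mod p), so the values of the even
  character \<psi> are ((p-1)/2)-th roots of unity; for p \<equiv> 3 (mod 4) this order is odd, hence
  coprime to 4, and \<psi>^4 = 1 would force \<psi> to be principal.\<close>

lemma dirichlet_char_mult: "dirichlet_char n chi \<Longrightarrow> chi (a * b) = chi a * chi b"
  unfolding dirichlet_char_def by simp

lemma dirichlet_char_eq_0_iff: "dirichlet_char n chi \<Longrightarrow> chi a = 0 \<longleftrightarrow> \<not> coprime a n"
  unfolding dirichlet_char_def by simp

lemma dirichlet_char_add_mult:
  assumes "dirichlet_char n chi"
  shows "chi (a + k * n) = chi a"
proof (induction k rule: int_induct[where k = 0])
  case (step1 i)
  have "chi (a + (i + 1) * n) = chi ((a + i * n) + n)" by (simp add: algebra_simps)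
  with step1 assms show ?case by (simp add: dirichlet_char_def)
next
  case (step2 i)
  have "chi (a + i * n) = chi ((a + (i - 1) * n) + n)" by (simp add: algebra_simps)
  with step2 assms show ?case by (simp add: dirichlet_char_def)
qed simp

lemma dirichlet_char_cong:
  assumes "dirichlet_char n chi" "[a = b] (mod n)"
  shows "chi a = chi b"
proof -
  obtain k where "b = a + n * k" using assms(2) by (auto simp: cong_iff_lin)
  then show ?thesis by (simp add: dirichlet_char_add_mult[OF assms(1)] mult.commute)
qed

lemma dirichlet_char_one:
  assumes "dirichlet_char n chi"
  shows "chi 1 = 1"
proof -
  have "chi 1 * chi 1 = chi 1" using dirichlet_char_mult[OF assms, of 1 1] by simp
  moreover have "chi 1 \<noteq> 0" using dirichlet_char_eq_0_iff[OF assms] by simp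
  ultimately show ?thesis by simp
qed

lemma dirichlet_char_power:
  assumes "dirichlet_char n chi"
  shows "chi (a ^ k) = chi a ^ k"
  by (induction k) (simp_all add: dirichlet_char_one[OF assms] dirichlet_char_mult[OF assms])

lemma dirichlet_char_times:
  assumes "dirichlet_char n chi1" "dirichlet_char n chi2"
  shows "dirichlet_char n (\<lambda>x. chi1 x * chi2 x)"
  using assms by (simp add: dirichlet_char_def mult_ac)

lemma principal_charI:
  assumes "dirichlet_char n chi" "\<And>a. coprime a n \<Longrightarrow> chi a = 1"
  shows "chi = principal_char n"
  using assms dirichlet_char_eq_0_iff[OF assms(1)] by (auto simp: principal_char_def)

lemma dirichlet_char_power_totient:
  assumes "dirichlet_char n chi" "n > 1" "coprime a n"
  shows "chi a ^ totient (nat n) = 1"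
proof -
  interpret residues n "residue_ring n" by unfold_locales fact
  have "chi a ^ totient (nat n) = chi (a ^ totient (nat n))"
    by (simp add: dirichlet_char_power[OF assms(1)])
  also have "\<dots> = chi 1"
    by (rule dirichlet_char_cong[OF assms(1) euler_theorem[OF assms(3)]])
  finally show ?thesis by (simp add: dirichlet_char_one[OF assms(1)])
qed

lemma dirichlet_char_cnj_mult_self:
  assumes "dirichlet_char n chi" "n > 1" "coprime a n"
  shows "cnj (chi a) * chi a = 1"
proof -
  have "norm (chi a) = 1"
    using power_eq_1_iff[OF dirichlet_char_power_totient[OF assms]] assms(2) by simp
  then show ?thesis by (metis complex_norm_square mult.commute of_real_1 power_one)
qed

lemma even_dirichlet_char_power_half:
  assumes "dirichlet_char p chi" "prime p" "p > 2" "chi (-1) = 1" "coprime a p"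
  shows "chi a ^ ((nat p - 1) div 2) = 1"
proof -
  have "[Legendre a p = a ^ ((nat p - 1) div 2)] (mod p)"
    using euler_criterion[of "nat p" a] assms(2,3) by simp
  moreover have "Legendre a p = 1 \<or> Legendre a p = -1"
    using assms(2,5) by (auto simp: Legendre_def cong_0_iff dest: coprime_common_divisor not_prime_unit)
  ultimately have "chi (a ^ ((nat p - 1) div 2)) = 1"
    using dirichlet_char_cong[OF assms(1)] dirichlet_char_one[OF assms(1)] assms(4) by metis
  then show ?thesis by (simp add: dirichlet_char_power[OF assms(1)])
qed

lemma eq_1_if_power_4_and_odd_power_eq_1:
  fixes x :: "'a::monoid_mult"
  assumes "x ^ 4 = 1" "x ^ m = 1" "odd m"
  shows "x = 1"
proof -
  obtain k where m: "m = 2 * k + 1" using assms(3) oddE by blast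
  have "m * 2 = 4 * k + 2" using m by simp
  then have "(x ^ m) ^ 2 = x ^ (4 * k + 2)" by (simp only: power_mult[symmetric])
  also have "\<dots> = x ^ 2" by (simp only: power_add power_mult assms(1) power_one mult_1_left)
  finally have "x ^ 2 = 1" using assms(2) by simp
  have "x = (x ^ 2) ^ k * x" using \<open>x ^ 2 = 1\<close> by simp
  also have "\<dots> = x ^ m" by (simp flip: power_mult power_Suc2 add: m)
  finally show ?thesis using assms(2) by simp
qed

lemma even_nonprincipal_char_value_not_power_4_eq_1:
  assumes "prime p" "p mod 4 = 3" "dirichlet_char p chi" "chi (-1) = 1"
    and "chi \<noteq> principal_char p"
  obtains t where "coprime t p" "chi t ^ 4 \<noteq> 1"
proof -
  have "odd ((n - 1) div 2)" if "n mod 4 = 3" for n :: nat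
    using that unfolding even_iff_mod_2_eq_zero by presburger
  moreover have "nat p mod 4 = 3"
    using assms(1,2) nat_mod_distrib[of p 4] by (simp add: prime_ge_0_int)
  ultimately have "odd ((nat p - 1) div 2)" by blast
  moreover have "p > 2" using prime_ge_2_int[OF assms(1)] assms(2) by (cases "p = 2") auto
  ultimately have "chi t = 1" if "coprime t p" "chi t ^ 4 = 1" for t
    using that assms(1,3,4) even_dirichlet_char_power_half eq_1_if_power_4_and_odd_power_eq_1
    by metis
  then show ?thesis using that assms(3,5) principal_charI by blast
qed

lemma bij_betw_mult_mod:
  fixes n t :: int
  assumes "n > 0" "coprime t n"
  shows "bij_betw (\<lambda>x. t * x mod n) {0..n-1} {0..n-1}"
proof -
  have inj: "inj_on (\<lambda>x. t * x mod n) {0..n-1}"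
  proof (rule inj_onI)
    fix x y assume "x \<in> {0..n-1}" "y \<in> {0..n-1}" "t * x mod n = t * y mod n"
    then show "x = y"
      using cong_mult_lcancel[OF assms(2)] cong_less_imp_eq_int[of x n y]
      by (auto simp: cong_def)
  qed
  have "(\<lambda>x. t * x mod n) ` {0..n-1} \<subseteq> {0..n-1}"
    using assms(1) by (auto simp: pos_mod_bound[OF assms(1), THEN zle_diff1_eq[THEN iffD2]])
  with inj show ?thesis by (simp add: bij_betw_def endo_inj_surj)
qed

lemma sum4_reindex_bij_betw:
  assumes "bij_betw h A A"
  shows "(\<Sum>a\<in>A. \<Sum>b\<in>A. \<Sum>c\<in>A. \<Sum>d\<in>A. F (h a) (h b) (h c) (h d))
       = (\<Sum>a\<in>A. \<Sum>b\<in>A. \<Sum>c\<in>A. \<Sum>d\<in>A. F a b c d)"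
proof -
  have R: "(\<Sum>x\<in>A. g (h x)) = (\<Sum>x\<in>A. g x)" for g :: "'a \<Rightarrow> 'b"
    by (rule sum.reindex_bij_betw[OF assms])
  have "(\<Sum>d\<in>A. F (h a) (h b) (h c) (h d)) = (\<Sum>d\<in>A. F (h a) (h b) (h c) d)" for a b c
    by (rule R)
  moreover have "(\<Sum>c\<in>A. \<Sum>d\<in>A. F (h a) (h b) (h c) d)
      = (\<Sum>c\<in>A. \<Sum>d\<in>A. F (h a) (h b) c d)" for a b
    by (rule R)
  moreover have "(\<Sum>b\<in>A. \<Sum>c\<in>A. \<Sum>d\<in>A. F (h a) (h b) c d)
      = (\<Sum>b\<in>A. \<Sum>c\<in>A. \<Sum>d\<in>A. F (h a) b c d)" for a
    by (rule R)
  moreover have "(\<Sum>a\<in>A. \<Sum>b\<in>A. \<Sum>c\<in>A. \<Sum>d\<in>A. F (h a) b c d)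
      = (\<Sum>a\<in>A. \<Sum>b\<in>A. \<Sum>c\<in>A. \<Sum>d\<in>A. F a b c d)"
    by (rule R)
  ultimately show ?thesis by simp
qed

definition mixed_power_sum :: "int \<Rightarrow> (int \<Rightarrow> complex) \<Rightarrow> nat \<Rightarrow> complex" where
  "mixed_power_sum n chi k = (\<Sum>a=0..n-1. \<Sum>b=0..n-1. \<Sum>c=0..n-1. \<Sum>d=0..n-1.
     cnj (chi (a^k + b^k - c^k - d^k)) * chi (a + b - c - d))"

lemma mixed_power_sum_scale:
  assumes "dirichlet_char n chi" "n > 0" "coprime t n"
  shows "mixed_power_sum n chi k = cnj (chi t) ^ k * chi t * mixed_power_sum n chi k"
proof -
  define h where "h x = t * x mod n" for x
  define F where "F a b c d = cnj (chi (a^k + b^k - c^k - d^k)) * chi (a + b - c - d)" for a b c d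
  have F_h: "F (h a) (h b) (h c) (h d) = cnj (chi t) ^ k * chi t * F a b c d" for a b c d
  proof -
    have h_cong: "[h x = t * x] (mod n)" for x by (simp add: h_def cong_def)
    have "[h a ^ k + h b ^ k - h c ^ k - h d ^ k = (t*a)^k + (t*b)^k - (t*c)^k - (t*d)^k] (mod n)"
      by (intro cong_add cong_diff cong_pow h_cong)
    then have "[h a ^ k + h b ^ k - h c ^ k - h d ^ k = t ^ k * (a^k + b^k - c^k - d^k)] (mod n)"
      by (simp add: power_mult_distrib algebra_simps)
    moreover have "[h a + h b - h c - h d = t*a + t*b - t*c - t*d] (mod n)"
      by (intro cong_add cong_diff h_cong)
    then have "[h a + h b - h c - h d = t * (a + b - c - d)] (mod n)"
      by (simp add: algebra_simps)
    ultimately show ?thesis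
      by (simp add: F_def dirichlet_char_cong[OF assms(1)] dirichlet_char_mult[OF assms(1)]
          dirichlet_char_power[OF assms(1)])
  qed
  have "mixed_power_sum n chi k
      = (\<Sum>a=0..n-1. \<Sum>b=0..n-1. \<Sum>c=0..n-1. \<Sum>d=0..n-1. F (h a) (h b) (h c) (h d))"
    unfolding mixed_power_sum_def F_def
    by (rule sum4_reindex_bij_betw[symmetric]) (use bij_betw_mult_mod[OF assms(2,3)] h_def in simp)
  also have "\<dots> = cnj (chi t) ^ k * chi t * mixed_power_sum n chi k"
    unfolding F_h by (simp add: mixed_power_sum_def F_def sum_distrib_left)
  finally show ?thesis .
qed

lemma mixed_power_sum_5_eq_0:
  assumes "prime p" "p mod 4 = 3" "dirichlet_char p chi" "chi (-1) = 1"
    and "chi \<noteq> principal_char p"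
  shows "mixed_power_sum p chi 5 = 0"
proof -
  obtain t where t: "coprime t p" "chi t ^ 4 \<noteq> 1"
    using even_nonprincipal_char_value_not_power_4_eq_1[OF assms] .
  have p: "p > 1" using prime_gt_1_int[OF assms(1)] .
  have "cnj (chi t) ^ 5 * chi t = cnj (chi t ^ 4) * (cnj (chi t) * chi t)"
    by (simp add: eval_nat_numeral)
  also have "\<dots> = cnj (chi t ^ 4)"
    by (simp add: dirichlet_char_cnj_mult_self[OF assms(3) p t(1)])
  finally have "mixed_power_sum p chi 5 = cnj (chi t ^ 4) * mixed_power_sum p chi 5"
    using mixed_power_sum_scale[OF assms(3) _ t(1), of 5] p by simp
  moreover have "cnj (chi t ^ 4) \<noteq> 1" using t(2) by (metis complex_cnj_cnj complex_cnj_one)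
  ultimately show ?thesis by (metis mult_cancel_right1)
qed

theorem lemma2p4:
  fixes p :: int and chi1 chi2 :: "int \<Rightarrow> complex"
  assumes "prime p" and "odd p" and "p mod 4 = 3"
    and "dirichlet_char p chi1" and "dirichlet_char p chi2"
    and "odd_char chi1" and "odd_char chi2"
    and "(\<lambda>x. chi1 x * chi2 x) \<noteq> principal_char p"
  shows "(\<Sum>a=0..p-1. \<Sum>b=0..p-1. \<Sum>c=0..p-1. \<Sum>d=0..p-1.
            cnj (chi1 (a^5 + b^5 - c^5 - d^5)) * cnj (chi2 (a^5 + b^5 - c^5 - d^5))
            * (chi1 (a + b - c - d) * chi2 (a + b - c - d))) = 0"
proof -
  have "dirichlet_char p (\<lambda>x. chi1 x * chi2 x)"
    using assms(4,5) by (rule dirichlet_char_times)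
  moreover have "chi1 (-1) * chi2 (-1) = 1"
    using assms(6,7) by (simp add: odd_char_def)
  ultimately have "mixed_power_sum p (\<lambda>x. chi1 x * chi2 x) 5 = 0"
    using mixed_power_sum_5_eq_0[OF assms(1,3) _ _ assms(8)] by simp
  then show ?thesis by (simp add: mixed_power_sum_def)
qed

end
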